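(* The following statements are equivalent for $(X,\tau,\mathcal{P})$: (1) $(X,\tau,\mathcal{P})$ is an almost $\mathcal{P}P$-space; (2) every $z$-ideal of $C(X)_\mathcal{P}$ is a $z^0$-ideal; (3) every maximal ideal of $C(X)_\mathcal{P}$ is a $z^0$-ideal; (4) every maximal ideal of $C(X)_\mathcal{P}$ consists entirely of zero divisors; (5) the sum of any two ideals of $C(X)_\mathcal{P}$ consisting of zero divisors is either $C(X)_\mathcal{P}$ or consists of zero divisors; (6) for each non-unit $f\in C(X)_\mathcal{P}$ there exists a nonzero $g\in C(X)_\mathcal{P}$ with $P(f)\subseteq Ann(g)$.
   Context: Let $(X,\tau)$ be a $T_1$ topological space and $\mathcal{P}$ an ideal of closed subsets of $X$ (a nonempty family of closed sets closed under finite unions and under taking closed subsets). For $f\colon X\to\mathbb{R}$, $D_f$ denotes the set of points of discontinuity of $f$, and $C(X)_\mathcal{P}=\{f\colon X\to\mathbb{R} : \overline{D_f}\in\mathcal{P}\}$, a commutative ring with unity under pointwise operations. For $f\in C(X)_\mathcal{P}$, $Z_\mathcal{P}(f)=\{x: f(x)=0\}$, $coz(f)=X\setminus Z_\mathcal{P}(f)$; $X_\mathcal{P}$ is $X$ with the topology having base $\{coz(f): f\in C(X)_\mathcal{P}\}$, $int_{X_\mathcal{P}}$ its interior operator. $(X,\tau,\mathcal{P})$ is an almost $\mathcal{P}P$-space if for every $f\in C(X)_\mathcal{P}$ with $Z_\mathcal{P}(f)\neq\emptyset$ one has $int_{X_\mathcal{P}}(Z_\mathcal{P}(f))\neq\emptyset$.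 $Ann(g)=\{h: hg=0\}$. In a commutative ring $R$ with unity, $M(a)$ (resp. $P(a)$) is the intersection of all maximal (resp. minimal prime) ideals containing $a$; an ideal $I$ is a $z$-ideal if $a\in I\Rightarrow M(a)\subseteq I$, and a $z^0$-ideal if $a\in I\Rightarrow P(a)\subseteq I$. *)

theory Defs
  imports "HOL-Analysis.Analysis" "HOL-Algebra.Ideal" "HOL-Algebra.AbelCoset"
begin

definition cont_at :: "'a topology \<Rightarrow> ('a \<Rightarrow> real) \<Rightarrow> 'a \<Rightarrow> bool" where
  "cont_at X f x \<longleftrightarrow> (\<forall>V. open V \<and> f x \<in> V \<longrightarrow> (\<exists>U. openin X U \<and> x \<in> U \<and> f ` U \<subseteq> V))"

definition discont :: "'a topology \<Rightarrow> ('a \<Rightarrow> real) \<Rightarrow> 'a set" where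
  "discont X f = {x \<in> topspace X. \<not> cont_at X f x}"

definition closed_ideal :: "'a topology \<Rightarrow> 'a set set \<Rightarrow> bool" where
  "closed_ideal X P \<longleftrightarrow> P \<noteq> {} \<and> (\<forall>A\<in>P. closedin X A)
     \<and> (\<forall>A\<in>P. \<forall>B\<in>P. A \<union> B \<in> P)
     \<and> (\<forall>A\<in>P. \<forall>B. closedin X B \<and> B \<subseteq> A \<longrightarrow> B \<in> P)"

(* The ring C(X)_P: functions X -> R (represented extensionally, value 0 outside X)
   with closure of D_f in P, pointwise operations *)
definition CP :: "'a topology \<Rightarrow> 'a set set \<Rightarrow> ('a \<Rightarrow> real) ring" where
  "CP X P = \<lparr> carrier = {f. (\<forall>x. x \<notin> topspace X \<longrightarrow> f x = 0) \<and> X closure_of (discont X f) \<in> P},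
              mult = (\<lambda>f g x. f x * g x),
              one = (\<lambda>x. if x \<in> topspace X then 1 else 0),
              zero = (\<lambda>x. 0),
              add = (\<lambda>f g x. f x + g x) \<rparr>"

definition Zset :: "'a topology \<Rightarrow> ('a \<Rightarrow> real) \<Rightarrow> 'a set" where
  "Zset X f = {x \<in> topspace X. f x = 0}"

definition coz :: "'a topology \<Rightarrow> ('a \<Rightarrow> real) \<Rightarrow> 'a set" where
  "coz X f = {x \<in> topspace X. f x \<noteq> 0}"

definition XP :: "'a topology \<Rightarrow> 'a set set \<Rightarrow> 'a topology" where
  "XP X P = topology_generated_by {coz X f | f. f \<in> carrier (CP X P)}"

definition almost_PP :: "'a topology \<Rightarrow> 'a set set \<Rightarrow> bool" where
  "almost_PP X P \<longleftrightarrow> (\<forall>f \<in> carrier (CP X P). Zset X f \<noteq> {} \<longrightarrow> (XP X P) interior_of (Zset X f) \<noteq> {})"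

definition minimal_prime :: "('b, 'c) ring_scheme \<Rightarrow> 'b set \<Rightarrow> bool" where
  "minimal_prime R I \<longleftrightarrow> primeideal I R \<and> (\<forall>J. primeideal J R \<and> J \<subseteq> I \<longrightarrow> J = I)"

(* M(a): intersection of all maximal ideals containing a (the whole ring if none) *)
definition Mset :: "('b, 'c) ring_scheme \<Rightarrow> 'b \<Rightarrow> 'b set" where
  "Mset R a = carrier R \<inter> \<Inter>{I. maximalideal I R \<and> a \<in> I}"

(* P(a): intersection of all minimal prime ideals containing a (the whole ring if none) *)
definition Pset :: "('b, 'c) ring_scheme \<Rightarrow> 'b \<Rightarrow> 'b set" where
  "Pset R a = carrier R \<inter> \<Inter>{I. minimal_prime R I \<and> a \<in> I}"

definition z_ideal :: "('b, 'c) ring_scheme \<Rightarrow> 'b set \<Rightarrow> bool" where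
  "z_ideal R I \<longleftrightarrow> ideal I R \<and> (\<forall>a\<in>I. Mset R a \<subseteq> I)"

definition z0_ideal :: "('b, 'c) ring_scheme \<Rightarrow> 'b set \<Rightarrow> bool" where
  "z0_ideal R I \<longleftrightarrow> ideal I R \<and> (\<forall>a\<in>I. Pset R a \<subseteq> I)"

definition zero_divisors :: "('b, 'c) ring_scheme \<Rightarrow> 'b set" where
  "zero_divisors R = {a \<in> carrier R. \<exists>b \<in> carrier R. b \<noteq> \<zero>\<^bsub>R\<^esub> \<and> a \<otimes>\<^bsub>R\<^esub> b = \<zero>\<^bsub>R\<^esub>}"

definition Ann :: "('b, 'c) ring_scheme \<Rightarrow> 'b \<Rightarrow> 'b set" where
  "Ann R g = {h \<in> carrier R. h \<otimes>\<^bsub>R\<^esub> g = \<zero>\<^bsub>R\<^esub>}"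

end

(*
  In C(X)_P a function is a unit exactly when it has no zeros, and the cozero sets of
  C(X)_P form the base of X_P. Hence X is almost PP iff every non-unit of C(X)_P is a
  zero divisor. Conditions (3), (4) and (6) are equivalent to this for general reasons:
  every non-unit lies in a maximal ideal, members of minimal primes are zero divisors, and
  in a reduced ring an annihilator of f annihilates all of P(f). For (1) => (2) one shows
  P(a) <= M(a): if b is in P(a) but b(x) /= 0 = a(x), the non-unit a^2 + (|b(x)|/2 - |b|)^+
  is annihilated by some g /= 0, which then kills a but not b. For (5) => (1), |f| splits
  as g + h with g vanishing near the zeros of f and h vanishing where |f| is large; both are
  zero divisors, and PIdl g + PIdl h is proper because everything in it vanishes at a zero of f.
*)

theory Submission
  imports Defs "HOL-Algebra.Ring_Divisibility"
begin

section \<open>Prime, minimal prime and maximal ideals\<close>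

lemma (in ring) exists_maximal_ideal_avoiding:
  assumes J: "ideal J R" and S: "J \<inter> S = {}"
  obtains M where "ideal M R" "J \<subseteq> M" "M \<inter> S = {}"
    "\<And>I. ideal I R \<Longrightarrow> M \<subseteq> I \<Longrightarrow> I \<inter> S = {} \<Longrightarrow> I = M"
proof -
  let ?A = "{I. ideal I R \<and> J \<subseteq> I \<and> I \<inter> S = {}}"
  have "\<exists>M\<in>?A. \<forall>I\<in>?A. M \<subseteq> I \<longrightarrow> I = M"
  proof (rule subset_Zorn_nonempty)
    show "?A \<noteq> {}" using J S by blast
    fix C assume C: "C \<noteq> {}" "subset.chain ?A C"
    then have CA: "C \<subseteq> ?A" by (simp add: pred_on.chain_def)
    have "subset.chain {I. ideal I R} C" using C(2) by (auto simp: pred_on.chain_def)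
    then have "ideal (\<Union>C) R" using chain_Union_is_ideal[of C] C(1) by simp
    moreover have "J \<subseteq> \<Union>C" "\<Union>C \<inter> S = {}" using C(1) CA by auto
    ultimately show "\<Union>C \<in> ?A" by blast
  qed
  then obtain M where "M \<in> ?A" "\<forall>I\<in>?A. M \<subseteq> I \<longrightarrow> I = M" by blast
  then show ?thesis using that by auto
qed

lemma (in cring) add_cgenideal:
  assumes I: "ideal I R" and a: "a \<in> carrier R"
  shows "ideal (I <+> PIdl a) R" "I \<subseteq> I <+> PIdl a" "a \<in> I <+> PIdl a"
proof -
  have PIdl: "ideal (PIdl a) R" using cgenideal_ideal[OF a] .
  show "ideal (I <+> PIdl a) R" using add_ideals[OF I PIdl] .
  have "I \<union> PIdl a \<subseteq> carrier R" using I PIdl by (simp add: ideal.Icarr subsetI)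
  then have "I \<union> PIdl a \<subseteq> I <+> PIdl a"
    using genideal_self[of "I \<union> PIdl a"] union_genideal[OF I PIdl] by simp
  then show "I \<subseteq> I <+> PIdl a" "a \<in> I <+> PIdl a" using cgenideal_self[OF a] by auto
qed

lemma (in cring) mem_add_cgenideal:
  "x \<in> I <+> PIdl a \<longleftrightarrow> (\<exists>i\<in>I. \<exists>r\<in>carrier R. x = i \<oplus> r \<otimes> a)"
  by (auto simp: set_add_def' cgenideal_def)

lemma (in cring) maximal_avoiding_ideal_meets:
  assumes M: "ideal M R" and a: "a \<in> carrier R" "a \<notin> M"
    and Mmax: "\<And>I. ideal I R \<Longrightarrow> M \<subseteq> I \<Longrightarrow> I \<inter> S = {} \<Longrightarrow> I = M"
  shows "\<exists>m\<in>M. \<exists>r\<in>carrier R. m \<oplus> r \<otimes> a \<in> S"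
proof -
  have "M <+>\<^bsub>R\<^esub> PIdl a \<noteq> M" using add_cgenideal(3)[OF M a(1)] a(2) by blast
  then have "(M <+>\<^bsub>R\<^esub> PIdl a) \<inter> S \<noteq> {}" using Mmax add_cgenideal(1,2)[OF M a(1)] by blast
  then show ?thesis by (auto simp: mem_add_cgenideal)
qed

lemma (in cring) exists_primeideal_avoiding:
  assumes S: "S \<subseteq> carrier R" "\<one> \<in> S" "\<zero> \<notin> S"
    and S_mult: "\<And>a b. a \<in> S \<Longrightarrow> b \<in> S \<Longrightarrow> a \<otimes> b \<in> S"
  obtains p where "primeideal p R" "p \<inter> S = {}"
proof -
  have "{\<zero>} \<inter> S = {}" using S(3) by blast
  then obtain M where M: "ideal M R" "M \<inter> S = {}"
    and Mmax: "\<And>I. ideal I R \<Longrightarrow> M \<subseteq> I \<Longrightarrow> I \<inter> S = {} \<Longrightarrow> I = M"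
    by (rule exists_maximal_ideal_avoiding[OF zeroideal]) (rule that)
  interpret M: ideal M R by (rule M(1))
  have meets: "\<exists>m\<in>M. \<exists>r\<in>carrier R. m \<oplus> r \<otimes> x \<in> S" if "x \<in> carrier R" "x \<notin> M" for x
    by (rule maximal_avoiding_ideal_meets[OF M(1) that]) (rule Mmax)
  have "primeideal M R"
  proof (rule primeidealI[OF M(1) is_cring])
    show "carrier R \<noteq> M" using S(2) M(2) by auto
    fix a b assume ab: "a \<in> carrier R" "b \<in> carrier R" "a \<otimes> b \<in> M"
    show "a \<in> M \<or> b \<in> M"
    proof (rule ccontr)
      assume "\<not> (a \<in> M \<or> b \<in> M)"
      then obtain m1 r1 m2 r2 where m: "m1 \<in> M" "r1 \<in> carrier R" "m1 \<oplus> r1 \<otimes> a \<in> S"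
        "m2 \<in> M" "r2 \<in> carrier R" "m2 \<oplus> r2 \<otimes> b \<in> S"
        using meets ab(1,2) by meson
      have c: "m1 \<in> carrier R" "m2 \<in> carrier R" using m M.Icarr by auto
      have "(m1 \<oplus> r1 \<otimes> a) \<otimes> (m2 \<oplus> r2 \<otimes> b)
          = m1 \<otimes> (m2 \<oplus> r2 \<otimes> b) \<oplus> ((r1 \<otimes> a) \<otimes> m2 \<oplus> (r1 \<otimes> r2) \<otimes> (a \<otimes> b))"
        using m c ab by (simp add: l_distr r_distr m_assoc m_lcomm a_ac)
      also have "\<dots> \<in> M"
      proof -
        have "m1 \<otimes> (m2 \<oplus> r2 \<otimes> b) \<in> M" "(r1 \<otimes> a) \<otimes> m2 \<in> M" "(r1 \<otimes> r2) \<otimes> (a \<otimes> b) \<in> M"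
          using M.I_r_closed[OF m(1)] M.I_l_closed[OF m(4)] M.I_l_closed[OF ab(3)] m ab by auto
        then show ?thesis by (intro M.a_closed)
      qed
      finally show False using S_mult[OF m(3) m(6)] M(2) by blast
    qed
  qed
  then show ?thesis using that M(2) by blast
qed

lemma (in cring) primeideal_Inter_chain:
  assumes "C \<noteq> {}" and prime: "\<And>q. q \<in> C \<Longrightarrow> primeideal q R"
    and chain: "\<And>q q'. q \<in> C \<Longrightarrow> q' \<in> C \<Longrightarrow> q \<subseteq> q' \<or> q' \<subseteq> q"
  shows "primeideal (\<Inter>C) R"
proof (rule primeidealI[OF _ is_cring])
  show "ideal (\<Inter>C) R" using assms(1) prime by (intro i_Intersect) (auto dest: primeideal.axioms(1))
  obtain q where q: "q \<in> C" using assms(1) by blast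
  have "\<one> \<notin> q"
    using prime[OF q] ideal.one_imp_carrier primeideal.I_notcarr primeideal.axioms(1) by metis
  then show "carrier R \<noteq> \<Inter>C" using q by auto
  fix a b assume ab: "a \<in> carrier R" "b \<in> carrier R" "a \<otimes> b \<in> \<Inter>C"
  show "a \<in> \<Inter>C \<or> b \<in> \<Inter>C"
  proof (rule ccontr)
    assume "\<not> (a \<in> \<Inter>C \<or> b \<in> \<Inter>C)"
    then obtain q1 q2 where q: "q1 \<in> C" "a \<notin> q1" "q2 \<in> C" "b \<notin> q2" by auto
    have "a \<in> q1 \<or> b \<in> q1" "a \<in> q2 \<or> b \<in> q2"
      using q ab prime by (meson InterD primeideal.I_prime)+
    then show False using q chain[OF q(1) q(3)] by auto
  qed
qed

lemma (in cring) exists_minimal_prime_subset: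
  assumes p: "primeideal p R"
  obtains q where "minimal_prime R q" "q \<subseteq> p"
proof -
  let ?A = "{q. primeideal q R \<and> q \<subseteq> p}"
  have "\<exists>m\<in>?A. \<forall>q\<in>?A. q \<subseteq> m \<longrightarrow> q = m"
  proof (rule predicate_Zorn)
    show "partial_order_on ?A (relation_of (\<lambda>a b. b \<subseteq> a) ?A)"
      by (rule partial_order_on_relation_ofI) auto
    fix C assume C: "C \<in> Chains (relation_of (\<lambda>a b. b \<subseteq> a) ?A)"
    then have CA: "C \<subseteq> ?A" and chain: "\<And>q q'. q \<in> C \<Longrightarrow> q' \<in> C \<Longrightarrow> q \<subseteq> q' \<or> q' \<subseteq> q"
      unfolding Chains_def relation_of_def by auto
    show "\<exists>u\<in>?A. \<forall>q\<in>C. u \<subseteq> q"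
    proof (cases "C = {}")
      case True
      then show ?thesis using p by auto
    next
      case False
      then have "\<Inter>C \<in> ?A" using CA primeideal_Inter_chain[OF False _ chain] by auto
      then show ?thesis by blast
    qed
  qed
  then obtain q where q: "primeideal q R" "q \<subseteq> p"
    and q_min: "\<And>q'. primeideal q' R \<Longrightarrow> q' \<subseteq> p \<Longrightarrow> q' \<subseteq> q \<Longrightarrow> q' = q" by auto
  have "minimal_prime R q" unfolding minimal_prime_def using q q_min by auto
  then show ?thesis using that q(2) by blast
qed

lemma (in cring) minimal_prime_power_annihilated:
  assumes q: "minimal_prime R q" and a: "a \<in> q"
  shows "\<exists>c\<in>carrier R - q. \<exists>n::nat. c \<otimes> a [^] n = \<zero>"
proof (rule ccontr)
  assume no_annihilator: "\<not> ?thesis"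
  interpret q: primeideal q R using q by (simp add: minimal_prime_def)
  have a_carr: "a \<in> carrier R" using a q.Icarr by blast
  let ?S = "{c \<otimes> a [^] (n::nat) | c n. c \<in> carrier R - q}"
  have one: "\<one> \<in> carrier R - q" using q.one_imp_carrier q.I_notcarr by auto
  obtain p where p: "primeideal p R" "p \<inter> ?S = {}"
  proof (rule exists_primeideal_avoiding)
    show "?S \<subseteq> carrier R" using a_carr by auto
    show "\<one> \<in> ?S" using one by (auto intro!: exI[of _ \<one>] exI[of _ "0::nat"])
    show "\<zero> \<notin> ?S" using no_annihilator by force
    fix x y assume "x \<in> ?S" "y \<in> ?S"
    then obtain c n d m where x: "x = c \<otimes> a [^] (n::nat)" "c \<in> carrier R - q"
      and y: "y = d \<otimes> a [^] (m::nat)" "d \<in> carrier R - q" by blast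
    have "x \<otimes> y = (c \<otimes> d) \<otimes> a [^] (n + m)"
      using x y a_carr by (simp add: nat_pow_mult[symmetric] m_assoc m_lcomm)
    moreover have "c \<otimes> d \<in> carrier R - q" using q.I_prime x(2) y(2) by auto
    ultimately show "x \<otimes> y \<in> ?S" by blast
  qed
  have "x \<in> ?S" if "x \<in> carrier R - q" for x
    using that by (auto intro!: exI[of _ x] exI[of _ "0::nat"])
  then have "p \<subseteq> q" using p(2) ideal.Icarr[OF primeideal.axioms(1)[OF p(1)]] by blast
  then have "p = q" using q p(1) by (auto simp: minimal_prime_def)
  moreover have "a \<in> ?S" using one a_carr by (auto intro!: exI[of _ \<one>] exI[of _ "1::nat"])
  ultimately show False using a p(2) by blast
qed

lemma (in cring) zero_divisor_if_annihilated_power: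
  assumes a: "a \<in> carrier R" and c: "c \<in> carrier R" "c \<noteq> \<zero>" and ann: "c \<otimes> a [^] (n::nat) = \<zero>"
  shows "a \<in> zero_divisors R"
  using ann
proof (induction n)
  case 0
  then show ?case using c by simp
next
  case (Suc n)
  show ?case
  proof (cases "c \<otimes> a [^] n = \<zero>")
    case True
    then show ?thesis by (rule Suc.IH)
  next
    case False
    have "a \<otimes> (c \<otimes> a [^] n) = \<zero>"
      using Suc.prems a c by (simp add: m_assoc[symmetric] m_comm m_lcomm)
    then show ?thesis using False a c unfolding zero_divisors_def by blast
  qed
qed

lemma (in cring) minimal_prime_subset_zero_divisors:
  assumes "minimal_prime R q"
  shows "q \<subseteq> zero_divisors R"
proof
  fix a assume a: "a \<in> q"
  interpret q: primeideal q R using assms by (simp add: minimal_prime_def)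
  obtain c n where c: "c \<in> carrier R" "c \<notin> q" "c \<otimes> a [^] (n::nat) = \<zero>"
    using minimal_prime_power_annihilated[OF assms a] by blast
  have "c \<noteq> \<zero>" using c(2) q.zero_closed by auto
  then show "a \<in> zero_divisors R"
    using zero_divisor_if_annihilated_power[OF _ c(1) _ c(3)] a q.Icarr by blast
qed

definition reduced :: "('b, 'c) ring_scheme \<Rightarrow> bool" where
  "reduced R \<longleftrightarrow> (\<forall>s\<in>carrier R. \<forall>n::nat. s [^]\<^bsub>R\<^esub> n = \<zero>\<^bsub>R\<^esub> \<longrightarrow> s = \<zero>\<^bsub>R\<^esub>)"

lemma (in cring) mem_Pset_self: "a \<in> carrier R \<Longrightarrow> a \<in> Pset R a"
  by (auto simp: Pset_def)

lemma (in cring) Pset_subset_Ann: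
  assumes "reduced R" and a: "a \<in> carrier R" and h: "h \<in> carrier R" "h \<otimes> a = \<zero>"
  shows "Pset R a \<subseteq> Ann R h"
proof
  fix b assume b: "b \<in> Pset R a"
  have b_carr: "b \<in> carrier R" using b by (simp add: Pset_def)
  have "h \<otimes> b = \<zero>"
  proof (rule ccontr)
    assume hb: "h \<otimes> b \<noteq> \<zero>"
    let ?S = "{(h \<otimes> b) [^] (n::nat) | n. True}"
    obtain p where p: "primeideal p R" "p \<inter> ?S = {}"
    proof (rule exists_primeideal_avoiding)
      show "?S \<subseteq> carrier R" using h b_carr by auto
      show "\<one> \<in> ?S" by (auto intro!: exI[of _ "0::nat"])
      have "h \<otimes> b \<in> carrier R" using h b_carr by simp
      show "\<zero> \<notin> ?S"
      proof
        assume "\<zero> \<in> ?S"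
        then obtain n where "(h \<otimes> b) [^] (n::nat) = \<zero>" by auto
        then show False using assms(1) hb \<open>h \<otimes> b \<in> carrier R\<close> unfolding reduced_def by blast
      qed
      fix x y assume "x \<in> ?S" "y \<in> ?S"
      then show "x \<otimes> y \<in> ?S" using h b_carr by (auto simp: nat_pow_mult)
    qed
    obtain q where q: "minimal_prime R q" "q \<subseteq> p" using exists_minimal_prime_subset[OF p(1)] .
    interpret q: primeideal q R using q(1) by (simp add: minimal_prime_def)
    have "h \<otimes> b \<in> ?S" using h b_carr by (auto intro!: exI[of _ "1::nat"])
    then have "h \<otimes> b \<notin> q" using p(2) q(2) by blast
    then have "h \<notin> q" "b \<notin> q" using q.I_r_closed q.I_l_closed h b_carr by auto
    moreover have "a \<in> q" using q.I_prime[OF h(1) a] h(2) q.zero_closed \<open>h \<notin> q\<close> by auto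
    then have "b \<in> q" using b q(1) by (auto simp: Pset_def)
    ultimately show False by blast
  qed
  then show "b \<in> Ann R h" using b_carr h by (simp add: Ann_def m_comm)
qed

lemma (in cring) maximalideal_comaximal:
  assumes M: "maximalideal M R" and b: "b \<in> carrier R" "b \<notin> M"
  shows "\<exists>m\<in>M. \<exists>r\<in>carrier R. m \<oplus> r \<otimes> b = \<one>"
proof -
  have M_ideal: "ideal M R" using maximalideal.axioms(1)[OF M] .
  have "M <+>\<^bsub>R\<^esub> PIdl b \<noteq> M" using add_cgenideal(3)[OF M_ideal b(1)] b(2) by blast
  then have "M <+>\<^bsub>R\<^esub> PIdl b = carrier R"
    using maximalideal.I_maximal[OF M add_cgenideal(1,2)[OF M_ideal b(1)]]
      ideal.Icarr[OF add_cgenideal(1)[OF M_ideal b(1)]] by blast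
  then show ?thesis using mem_add_cgenideal[of \<one> M b] by (metis one_closed)
qed

lemma (in cring) cgenideal_subset_zero_divisors:
  assumes a: "a \<in> carrier R" and b: "b \<in> carrier R" "b \<noteq> \<zero>" "a \<otimes> b = \<zero>"
  shows "PIdl a \<subseteq> zero_divisors R"
proof
  fix x assume "x \<in> PIdl a"
  then obtain r where r: "r \<in> carrier R" "x = r \<otimes> a" by (auto simp: cgenideal_def)
  then have "x \<otimes> b = \<zero>" using a b by (simp add: m_assoc)
  then show "x \<in> zero_divisors R" using r a b unfolding zero_divisors_def by auto
qed

lemma (in cring) ideal_eq_carrier_if_unit:
  assumes I: "ideal I R" and u: "u \<in> I" "u \<in> Units R"
  shows "I = carrier R"
proof -
  have "inv u \<otimes> u \<in> I" using ideal.I_l_closed[OF I u(1) Units_inv_closed[OF u(2)]] .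
  then show ?thesis using Units_l_inv[OF u(2)] ideal.one_imp_carrier[OF I] by simp
qed

lemma (in cring) exists_maximalideal:
  assumes a: "a \<in> carrier R" "a \<notin> Units R"
  obtains M where "maximalideal M R" "a \<in> M"
proof -
  have "\<one> \<notin> PIdl a"
  proof
    assume "\<one> \<in> PIdl a"
    then obtain x where "x \<in> carrier R" "\<one> = x \<otimes> a" by (auto simp: cgenideal_def)
    then show False using a by (auto simp: Units_def m_comm)
  qed
  then have "PIdl a \<inter> {\<one>} = {}" by blast
  then obtain M where M: "ideal M R" "PIdl a \<subseteq> M" "M \<inter> {\<one>} = {}"
    and M_max: "\<And>I. ideal I R \<Longrightarrow> M \<subseteq> I \<Longrightarrow> I \<inter> {\<one>} = {} \<Longrightarrow> I = M"
    by (rule exists_maximal_ideal_avoiding[OF cgenideal_ideal[OF a(1)]]) (rule that)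
  have "maximalideal M R"
  proof (rule maximalidealI[OF M(1)])
    show "carrier R \<noteq> M" using M(3) by auto
    fix J assume J: "ideal J R" "M \<subseteq> J" "J \<subseteq> carrier R"
    show "J = M \<or> J = carrier R"
      using M_max[OF J(1,2)] ideal.one_imp_carrier[OF J(1)] by blast
  qed
  then show ?thesis using that M(2) cgenideal_self[OF a(1)] by blast
qed

lemma (in cring) maximalideal_is_z_ideal: "maximalideal M R \<Longrightarrow> z_ideal R M"
  unfolding z_ideal_def Mset_def by (auto dest: maximalideal.axioms(1))

lemma (in cring) maximalideal_disjoint_Units:
  assumes "maximalideal M R"
  shows "M \<inter> Units R = {}"
  using ideal_eq_carrier_if_unit maximalideal.axioms(1)[OF assms] maximalideal.I_notcarr[OF assms]
  by blast

lemma (in cring) maximalideals_subset_zero_divisors_iff: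
  "(\<forall>M. maximalideal M R \<longrightarrow> M \<subseteq> zero_divisors R) \<longleftrightarrow> carrier R - Units R \<subseteq> zero_divisors R"
proof
  assume max_zd: "\<forall>M. maximalideal M R \<longrightarrow> M \<subseteq> zero_divisors R"
  show "carrier R - Units R \<subseteq> zero_divisors R"
  proof
    fix a assume "a \<in> carrier R - Units R"
    then obtain M where "maximalideal M R" "a \<in> M"
      by (auto elim: exists_maximalideal)
    then show "a \<in> zero_divisors R" using max_zd by blast
  qed
next
  assume nonunits_zd: "carrier R - Units R \<subseteq> zero_divisors R"
  show "\<forall>M. maximalideal M R \<longrightarrow> M \<subseteq> zero_divisors R"
  proof (intro allI impI subsetI)
    fix M a assume M: "maximalideal M R" and a: "a \<in> M"
    have "a \<in> carrier R" using ideal.Icarr[OF maximalideal.axioms(1)[OF M] a] .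
    moreover have "a \<notin> Units R" using maximalideal_disjoint_Units[OF M] a by blast
    ultimately show "a \<in> zero_divisors R" using nonunits_zd by blast
  qed
qed

lemma (in cring) nonunits_zero_divisors_if_maximalideals_z0:
  assumes max_z0: "\<And>M. maximalideal M R \<Longrightarrow> z0_ideal R M"
  shows "carrier R - Units R \<subseteq> zero_divisors R"
proof
  fix a assume a: "a \<in> carrier R - Units R"
  then obtain M where M: "maximalideal M R" "a \<in> M" by (auto elim: exists_maximalideal)
  show "a \<in> zero_divisors R"
  proof (rule ccontr)
    assume "a \<notin> zero_divisors R"
    then have "\<not> (minimal_prime R q \<and> a \<in> q)" for q
      using minimal_prime_subset_zero_divisors by blast
    then have "Pset R a = carrier R" unfolding Pset_def by auto
    then have "\<one> \<in> M" using max_z0[OF M(1)] M(2) by (auto simp: z0_ideal_def)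
    then show False
      using maximalideal_disjoint_Units[OF M(1)] Units_one_closed by blast
  qed
qed

lemma (in cring) ideal_eq_carrier_or_subset_zero_divisors:
  assumes "carrier R - Units R \<subseteq> zero_divisors R" and I: "ideal I R"
  shows "I = carrier R \<or> I \<subseteq> zero_divisors R"
proof (cases "I \<inter> Units R = {}")
  case True
  then show ?thesis using assms(1) ideal.Icarr[OF I] by blast
next
  case False
  then show ?thesis using ideal_eq_carrier_if_unit[OF I] by blast
qed

lemma (in cring) nonunits_zero_divisors_iff_Pset_subset_Ann:
  assumes "reduced R"
  shows "carrier R - Units R \<subseteq> zero_divisors R \<longleftrightarrow>
    (\<forall>f\<in>carrier R. f \<notin> Units R \<longrightarrow> (\<exists>g\<in>carrier R. g \<noteq> \<zero> \<and> Pset R f \<subseteq> Ann R g))"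
proof
  assume nonunits_zd: "carrier R - Units R \<subseteq> zero_divisors R"
  show "\<forall>f\<in>carrier R. f \<notin> Units R \<longrightarrow> (\<exists>g\<in>carrier R. g \<noteq> \<zero> \<and> Pset R f \<subseteq> Ann R g)"
  proof (intro ballI impI)
    fix f assume "f \<in> carrier R" "f \<notin> Units R"
    then obtain g where g: "g \<in> carrier R" "g \<noteq> \<zero>" "f \<otimes> g = \<zero>"
      using nonunits_zd unfolding zero_divisors_def by blast
    then have "Pset R f \<subseteq> Ann R g"
      using Pset_subset_Ann[OF assms \<open>f \<in> carrier R\<close> g(1)] \<open>f \<in> carrier R\<close> by (simp add: m_comm)
    then show "\<exists>g\<in>carrier R. g \<noteq> \<zero> \<and> Pset R f \<subseteq> Ann R g" using g by blast
  qed
next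
  assume Pset_Ann: "\<forall>f\<in>carrier R. f \<notin> Units R \<longrightarrow> (\<exists>g\<in>carrier R. g \<noteq> \<zero> \<and> Pset R f \<subseteq> Ann R g)"
  show "carrier R - Units R \<subseteq> zero_divisors R"
  proof
    fix f assume f: "f \<in> carrier R - Units R"
    then obtain g where "g \<in> carrier R" "g \<noteq> \<zero>" "f \<in> Ann R g"
      using Pset_Ann mem_Pset_self by blast
    then show "f \<in> zero_divisors R" using f by (auto simp: Ann_def zero_divisors_def)
  qed
qed

section \<open>Sets of discontinuity\<close>

lemma cont_at_iff_tendsto:
  "x \<in> topspace X \<Longrightarrow> cont_at X f x \<longleftrightarrow> (f \<longlongrightarrow> f x) (nhdsin X x)"
  unfolding cont_at_def tendsto_def eventually_nhdsin by (auto simp: image_subset_iff)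

lemma discont_subset_if_cont_at:
  assumes "\<And>x. x \<in> topspace X \<Longrightarrow> cont_at X f x \<Longrightarrow> cont_at X g x \<Longrightarrow> cont_at X h x"
  shows "discont X h \<subseteq> discont X f \<union> discont X g"
  using assms unfolding discont_def by blast

lemma discont_add: "discont X (\<lambda>z. f z + g z) \<subseteq> discont X f \<union> discont X g"
  by (rule discont_subset_if_cont_at) (simp add: cont_at_iff_tendsto tendsto_add)

lemma discont_mult: "discont X (\<lambda>z. f z * g z) \<subseteq> discont X f \<union> discont X g"
  by (rule discont_subset_if_cont_at) (simp add: cont_at_iff_tendsto tendsto_mult)

lemma discont_compose:
  assumes "continuous_on UNIV \<phi>"
  shows "discont X (\<lambda>z. \<phi> (f z)) \<subseteq> discont X f"
proof -
  have "isCont \<phi> y" for y using assms by (simp add: continuous_on_eq_continuous_at)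
  then have "discont X (\<lambda>z. \<phi> (f z)) \<subseteq> discont X f \<union> discont X f"
    by (intro discont_subset_if_cont_at) (simp add: cont_at_iff_tendsto isCont_tendsto_compose)
  then show ?thesis by simp
qed

lemma discont_inverse:
  assumes "\<And>x. x \<in> topspace X \<Longrightarrow> f x \<noteq> 0"
  shows "discont X (\<lambda>z. inverse (f z)) \<subseteq> discont X f"
proof -
  have "discont X (\<lambda>z. inverse (f z)) \<subseteq> discont X f \<union> discont X f"
    by (rule discont_subset_if_cont_at) (simp add: cont_at_iff_tendsto tendsto_inverse assms)
  then show ?thesis by simp
qed

lemma discont_restrict: "discont X (\<lambda>z. if z \<in> topspace X then h z else 0) = discont X h"
proof -
  have "(\<lambda>z. if z \<in> topspace X then h z else 0) ` U = h ` U" if "openin X U" for U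
    using openin_subset[OF that] by (auto simp: image_def)
  then have "cont_at X (\<lambda>z. if z \<in> topspace X then h z else 0) x = cont_at X h x"
    if "x \<in> topspace X" for x
    using that unfolding cont_at_def by (metis (no_types, lifting))
  then show ?thesis unfolding discont_def by auto
qed

lemma discont_const: "discont X (\<lambda>z. c) = {}"
  unfolding discont_def cont_at_def by (auto intro!: exI[of _ "topspace X"])

lemma closed_ideal_closed_subset:
  "closed_ideal X P \<Longrightarrow> A \<in> P \<Longrightarrow> closedin X B \<Longrightarrow> B \<subseteq> A \<Longrightarrow> B \<in> P"
  unfolding closed_ideal_def by meson

lemma closed_ideal_Un: "closed_ideal X P \<Longrightarrow> A \<in> P \<Longrightarrow> B \<in> P \<Longrightarrow> A \<union> B \<in> P"
  unfolding closed_ideal_def by meson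

lemma closed_ideal_empty: "closed_ideal X P \<Longrightarrow> {} \<in> P"
  unfolding closed_ideal_def by (metis closedin_empty empty_subsetI ex_in_conv)

section \<open>The ring C(X)_P\<close>

lemma CP_carrier:
  "f \<in> carrier (CP X P) \<longleftrightarrow> (\<forall>x. x \<notin> topspace X \<longrightarrow> f x = 0) \<and> X closure_of discont X f \<in> P"
  by (simp add: CP_def)

lemma CP_mult [simp]: "f \<otimes>\<^bsub>CP X P\<^esub> g = (\<lambda>z. f z * g z)"
  and CP_add [simp]: "f \<oplus>\<^bsub>CP X P\<^esub> g = (\<lambda>z. f z + g z)"
  and CP_one [simp]: "\<one>\<^bsub>CP X P\<^esub> = (\<lambda>x. if x \<in> topspace X then 1 else 0)"
  and CP_zero [simp]: "\<zero>\<^bsub>CP X P\<^esub> = (\<lambda>x. 0)"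
  by (simp_all add: CP_def)

lemma CP_vanishes_outside: "f \<in> carrier (CP X P) \<Longrightarrow> x \<notin> topspace X \<Longrightarrow> f x = 0"
  by (simp add: CP_carrier)

lemma CP_closed_if_discont_subset:
  assumes P: "closed_ideal X P" and f: "f \<in> carrier (CP X P)" and g: "g \<in> carrier (CP X P)"
    and h: "\<And>x. x \<notin> topspace X \<Longrightarrow> h x = 0" "discont X h \<subseteq> discont X f \<union> discont X g"
  shows "h \<in> carrier (CP X P)"
proof -
  have "X closure_of discont X f \<union> X closure_of discont X g \<in> P"
    using f g closed_ideal_Un[OF P] by (simp add: CP_carrier)
  moreover have "X closure_of discont X h \<subseteq> X closure_of discont X f \<union> X closure_of discont X g"
    using closure_of_mono[OF h(2)] by (simp add: closure_of_Un)
  ultimately show ?thesis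
    using h(1) closed_ideal_closed_subset[OF P] by (simp add: CP_carrier)
qed

lemma CP_add_closed:
  assumes "closed_ideal X P" "f \<in> carrier (CP X P)" "g \<in> carrier (CP X P)"
  shows "(\<lambda>z. f z + g z) \<in> carrier (CP X P)"
  by (rule CP_closed_if_discont_subset[OF assms _ discont_add]) (simp add: CP_vanishes_outside[OF assms(2)] CP_vanishes_outside[OF assms(3)])

lemma CP_mult_closed:
  assumes "closed_ideal X P" "f \<in> carrier (CP X P)" "g \<in> carrier (CP X P)"
  shows "(\<lambda>z. f z * g z) \<in> carrier (CP X P)"
  by (rule CP_closed_if_discont_subset[OF assms _ discont_mult]) (simp add: CP_vanishes_outside[OF assms(2)])

lemma CP_compose_closed:
  assumes "closed_ideal X P" "f \<in> carrier (CP X P)" "continuous_on UNIV \<phi>" "\<phi> 0 = 0"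
  shows "(\<lambda>z. \<phi> (f z)) \<in> carrier (CP X P)"
proof (rule CP_closed_if_discont_subset[OF assms(1,2,2)])
  show "discont X (\<lambda>z. \<phi> (f z)) \<subseteq> discont X f \<union> discont X f"
    using discont_compose[OF assms(3)] by simp
qed (simp add: assms(4) CP_vanishes_outside[OF assms(2)])

lemma CP_restrict_compose_closed:
  assumes "closed_ideal X P" "f \<in> carrier (CP X P)" "continuous_on UNIV \<phi>"
  shows "(\<lambda>z. if z \<in> topspace X then \<phi> (f z) else 0) \<in> carrier (CP X P)"
proof (rule CP_closed_if_discont_subset[OF assms(1,2,2)])
  show "discont X (\<lambda>z. if z \<in> topspace X then \<phi> (f z) else 0) \<subseteq> discont X f \<union> discont X f"
    using discont_compose[OF assms(3)] by (simp add: discont_restrict)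
qed simp

lemma CP_zero_closed: "closed_ideal X P \<Longrightarrow> (\<lambda>z. 0) \<in> carrier (CP X P)"
  by (simp add: CP_carrier discont_const closed_ideal_empty)

lemma CP_one_closed: "closed_ideal X P \<Longrightarrow> (\<lambda>x. if x \<in> topspace X then 1 else 0) \<in> carrier (CP X P)"
  using CP_restrict_compose_closed[OF _ CP_zero_closed, of X P "\<lambda>_. 1"] by simp

lemma CP_inverse_closed:
  assumes "closed_ideal X P" "f \<in> carrier (CP X P)" "\<And>x. x \<in> topspace X \<Longrightarrow> f x \<noteq> 0"
  shows "(\<lambda>z. inverse (f z)) \<in> carrier (CP X P)"
proof (rule CP_closed_if_discont_subset[OF assms(1,2,2)])
  show "discont X (\<lambda>z. inverse (f z)) \<subseteq> discont X f \<union> discont X f"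
    using discont_inverse[OF assms(3)] by simp
qed (simp add: CP_vanishes_outside[OF assms(2)])

lemma cring_CP: assumes P: "closed_ideal X P" shows "cring (CP X P)"
proof (rule cringI)
  show "abelian_group (CP X P)"
  proof (rule abelian_groupI)
    fix f assume "f \<in> carrier (CP X P)"
    then have "(\<lambda>z. - f z) \<in> carrier (CP X P)"
      using CP_compose_closed[OF P, of f uminus] by (simp add: continuous_on_minus)
    moreover have "(\<lambda>z. - f z) \<oplus>\<^bsub>CP X P\<^esub> f = \<zero>\<^bsub>CP X P\<^esub>" by simp
    ultimately show "\<exists>g\<in>carrier (CP X P). g \<oplus>\<^bsub>CP X P\<^esub> f = \<zero>\<^bsub>CP X P\<^esub>" by blast
  qed (auto simp: CP_add_closed[OF P] CP_zero_closed[OF P] algebra_simps)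
  show "comm_monoid (CP X P)"
  proof (rule comm_monoidI)
    fix f assume "f \<in> carrier (CP X P)"
    then show "\<one>\<^bsub>CP X P\<^esub> \<otimes>\<^bsub>CP X P\<^esub> f = f" by (auto simp: fun_eq_iff CP_vanishes_outside)
  qed (auto simp: CP_mult_closed[OF P] CP_one_closed[OF P] algebra_simps)
qed (auto simp: algebra_simps)

lemma CP_pow:
  "f \<in> carrier (CP X P) \<Longrightarrow> f [^]\<^bsub>CP X P\<^esub> (n::nat) = (\<lambda>z. if z \<in> topspace X then f z ^ n else 0)"
  by (induction n) (auto simp: fun_eq_iff CP_vanishes_outside)

lemma reduced_CP: "reduced (CP X P)"
  unfolding reduced_def
proof (intro ballI allI impI)
  fix f and n :: nat assume f: "f \<in> carrier (CP X P)" and "f [^]\<^bsub>CP X P\<^esub> n = \<zero>\<^bsub>CP X P\<^esub>"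
  then have "f z ^ n = 0" if "z \<in> topspace X" for z
    using that CP_pow[OF f, of n] by (metis CP_zero)
  then have "f z = 0" for z using CP_vanishes_outside[OF f, of z] by (cases "z \<in> topspace X") auto
  then show "f = \<zero>\<^bsub>CP X P\<^esub>" by (simp add: fun_eq_iff)
qed

lemma CP_Units_iff:
  assumes P: "closed_ideal X P" and f: "f \<in> carrier (CP X P)"
  shows "f \<in> Units (CP X P) \<longleftrightarrow> Zset X f = {}"
proof
  assume "f \<in> Units (CP X P)"
  then obtain g where "(\<lambda>z. g z * f z) = (\<lambda>x. if x \<in> topspace X then 1 else 0)"
    unfolding Units_def by auto
  then have "g z * f z = 1" if "z \<in> topspace X" for z using that by metis
  then show "Zset X f = {}" unfolding Zset_def by force
next
  assume "Zset X f = {}"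
  then have nonzero: "f x \<noteq> 0" if "x \<in> topspace X" for x using that by (auto simp: Zset_def)
  then have "(\<lambda>z. inverse (f z) * f z) = \<one>\<^bsub>CP X P\<^esub>" "(\<lambda>z. f z * inverse (f z)) = \<one>\<^bsub>CP X P\<^esub>"
    using CP_vanishes_outside[OF f] by (auto simp: fun_eq_iff)
  then show "f \<in> Units (CP X P)"
    unfolding Units_def using f CP_inverse_closed[OF P f nonzero] by auto
qed

lemma CP_zero_divisors_iff:
  "f \<in> zero_divisors (CP X P) \<longleftrightarrow>
    f \<in> carrier (CP X P) \<and> (\<exists>g\<in>carrier (CP X P). (\<exists>y. g y \<noteq> 0) \<and> (\<forall>z. f z * g z = 0))"
  unfolding zero_divisors_def by (auto simp: fun_eq_iff)

section \<open>Almost P P-spaces\<close>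

lemma coz_openin_XP: "g \<in> carrier (CP X P) \<Longrightarrow> openin (XP X P) (coz X g)"
  unfolding XP_def by (rule topology_generated_by_Basis) blast

lemma openin_XP_contains_coz:
  assumes P: "closed_ideal X P" and T: "openin (XP X P) T" and x: "x \<in> T"
  shows "\<exists>g\<in>carrier (CP X P). g x \<noteq> 0 \<and> coz X g \<subseteq> T"
proof -
  have "generate_topology_on {coz X f | f. f \<in> carrier (CP X P)} T"
    using T unfolding XP_def by (rule openin_topology_generated_by)
  then show ?thesis using x
  proof (induction arbitrary: x)
    case Empty
    then show ?case by simp
  next
    case (Int a b)
    then obtain g1 g2 where g: "g1 \<in> carrier (CP X P)" "g1 x \<noteq> 0" "coz X g1 \<subseteq> a"
      "g2 \<in> carrier (CP X P)" "g2 x \<noteq> 0" "coz X g2 \<subseteq> b" by (meson IntD1 IntD2)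
    then have "coz X (\<lambda>z. g1 z * g2 z) \<subseteq> a \<inter> b" by (auto simp: coz_def)
    then show ?case using g CP_mult_closed[OF P g(1) g(4)] by (intro bexI[of _ "\<lambda>z. g1 z * g2 z"]) auto
  next
    case (UN K)
    then show ?case by blast
  next
    case (Basis s)
    then show ?case by (auto simp: coz_def)
  qed
qed

lemma almost_PP_iff_nonunits_zero_divisors:
  assumes P: "closed_ideal X P"
  shows "almost_PP X P \<longleftrightarrow> carrier (CP X P) - Units (CP X P) \<subseteq> zero_divisors (CP X P)"
proof
  assume almost: "almost_PP X P"
  show "carrier (CP X P) - Units (CP X P) \<subseteq> zero_divisors (CP X P)"
  proof
    fix f assume f: "f \<in> carrier (CP X P) - Units (CP X P)"
    then have "Zset X f \<noteq> {}" using CP_Units_iff[OF P] by blast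
    then obtain y where "y \<in> XP X P interior_of Zset X f"
      using almost f unfolding almost_PP_def by blast
    then obtain T where T: "openin (XP X P) T" "y \<in> T" "T \<subseteq> Zset X f"
      unfolding interior_of_def by blast
    obtain g where g: "g \<in> carrier (CP X P)" "g y \<noteq> 0" "coz X g \<subseteq> T"
      using openin_XP_contains_coz[OF P T(1,2)] by blast
    have "f z * g z = 0" for z
      using g(3) T(3) CP_vanishes_outside[OF g(1), of z] by (auto simp: coz_def Zset_def)
    then show "f \<in> zero_divisors (CP X P)" using f g by (auto simp: CP_zero_divisors_iff)
  qed
next
  assume nonunits_zd: "carrier (CP X P) - Units (CP X P) \<subseteq> zero_divisors (CP X P)"
  show "almost_PP X P" unfolding almost_PP_def
  proof (intro ballI impI)
    fix f assume f: "f \<in> carrier (CP X P)" "Zset X f \<noteq> {}"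
    then have "f \<in> zero_divisors (CP X P)" using nonunits_zd CP_Units_iff[OF P] by blast
    then obtain g y where g: "g \<in> carrier (CP X P)" "g y \<noteq> 0" "\<And>z. f z * g z = 0"
      unfolding CP_zero_divisors_iff by blast
    have "coz X g \<subseteq> XP X P interior_of Zset X f"
      using g(3) by (intro interior_of_maximal coz_openin_XP[OF g(1)]) (auto simp: coz_def Zset_def)
    moreover have "y \<in> coz X g" using g(2) CP_vanishes_outside[OF g(1)] by (auto simp: coz_def)
    ultimately show "XP X P interior_of Zset X f \<noteq> {}" by blast
  qed
qed

lemma CP_mem_Mset_if_Zset_subset:
  assumes P: "closed_ideal X P" and a: "a \<in> carrier (CP X P)" and b: "b \<in> carrier (CP X P)"
    and Z: "Zset X a \<subseteq> Zset X b"
  shows "b \<in> Mset (CP X P) a"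
proof -
  interpret cring "CP X P" by (rule cring_CP[OF P])
  have "b \<in> M" if M: "maximalideal M (CP X P)" "a \<in> M" for M
  proof (rule ccontr)
    assume "b \<notin> M"
    then obtain m r where m: "m \<in> M" "r \<in> carrier (CP X P)" "m \<oplus>\<^bsub>CP X P\<^esub> r \<otimes>\<^bsub>CP X P\<^esub> b = \<one>\<^bsub>CP X P\<^esub>"
      using maximalideal_comaximal[OF M(1) b] by blast
    interpret M: maximalideal M "CP X P" by (rule M(1))
    have m_carr: "m \<in> carrier (CP X P)" using m(1) M.Icarr by blast
    let ?u = "a \<otimes>\<^bsub>CP X P\<^esub> a \<oplus>\<^bsub>CP X P\<^esub> m \<otimes>\<^bsub>CP X P\<^esub> m"
    have u_carr: "?u \<in> carrier (CP X P)"
      using CP_add_closed[OF P CP_mult_closed[OF P a a] CP_mult_closed[OF P m_carr m_carr]] by simp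
    have "Zset X ?u = {}"
    proof (rule ccontr)
      assume "Zset X ?u \<noteq> {}"
      then obtain z where z: "z \<in> topspace X" "a z * a z + m z * m z = 0" by (auto simp: Zset_def)
      then have "a z = 0" "m z = 0" by (auto simp: sum_squares_eq_zero_iff)
      then have "b z = 0" using Z z(1) by (auto simp: Zset_def)
      moreover have "m z + r z * b z = 1" using fun_cong[OF m(3), of z] z(1) by simp
      ultimately show False using \<open>m z = 0\<close> by simp
    qed
    then have "?u \<in> Units (CP X P)" using CP_Units_iff[OF P u_carr] by simp
    moreover have "?u \<in> M" using M.I_l_closed[OF M(2) a] M.I_l_closed[OF m(1) m_carr] M.a_closed by blast
    ultimately show False using maximalideal_disjoint_Units[OF M(1)] by blast
  qed
  then show ?thesis unfolding Mset_def using b by blast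
qed

lemma CP_Zset_subset_if_mem_Pset:
  assumes P: "closed_ideal X P"
    and nonunits_zd: "carrier (CP X P) - Units (CP X P) \<subseteq> zero_divisors (CP X P)"
    and a: "a \<in> carrier (CP X P)" and b: "b \<in> carrier (CP X P)" and b_Pset: "b \<in> Pset (CP X P) a"
  shows "Zset X a \<subseteq> Zset X b"
proof
  fix x assume "x \<in> Zset X a"
  then have x: "x \<in> topspace X" "a x = 0" by (auto simp: Zset_def)
  show "x \<in> Zset X b"
  proof (rule ccontr)
    assume "x \<notin> Zset X b"
    define c where "c = \<bar>b x\<bar> / 2"
    have c: "c > 0" using \<open>x \<notin> Zset X b\<close> x(1) by (auto simp: Zset_def c_def)
    define w where "w z = (if z \<in> topspace X then max 0 (c - \<bar>b z\<bar>) else 0)" for z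
    let ?k = "\<lambda>z. a z * a z + w z"
    have "w \<in> carrier (CP X P)"
      unfolding w_def by (rule CP_restrict_compose_closed[OF P b]) (intro continuous_intros)
    then have k: "?k \<in> carrier (CP X P)" using CP_add_closed[OF P CP_mult_closed[OF P a a]] by blast
    have "x \<in> Zset X ?k" using x c by (simp add: Zset_def w_def c_def)
    then have "?k \<notin> Units (CP X P)" using CP_Units_iff[OF P k] by auto
    then have "?k \<in> zero_divisors (CP X P)" using subsetD[OF nonunits_zd] k by simp
    then obtain g y where g: "g \<in> carrier (CP X P)" "g y \<noteq> 0" "\<And>z. ?k z * g z = 0"
      unfolding CP_zero_divisors_iff by blast
    have g_support: "a z = 0 \<and> \<bar>b z\<bar> \<ge> c" if "g z \<noteq> 0" for z
    proof -
      have z: "z \<in> topspace X" using CP_vanishes_outside[OF g(1)] that by blast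
      have "a z * a z + max 0 (c - \<bar>b z\<bar>) = 0" using g(3)[of z] that z by (simp add: w_def)
      moreover have "a z * a z \<ge> 0" "max 0 (c - \<bar>b z\<bar>) \<ge> 0" by simp_all
      ultimately have "a z * a z = 0" "max 0 (c - \<bar>b z\<bar>) = 0" by linarith+
      then show ?thesis by simp
    qed
    interpret cring "CP X P" by (rule cring_CP[OF P])
    have "g z * a z = 0" for z using g_support[of z] by (cases "g z = 0") auto
    then have "g \<otimes>\<^bsub>CP X P\<^esub> a = \<zero>\<^bsub>CP X P\<^esub>" by (simp add: fun_eq_iff)
    then have "b \<in> Ann (CP X P) g" using Pset_subset_Ann[OF reduced_CP a g(1)] b_Pset by blast
    then have "b y * g y = 0" by (simp add: Ann_def fun_eq_iff)
    then show False using g_support[OF g(2)] g(2) c by simp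
  qed
qed

lemma CP_z_ideal_is_z0_ideal:
  assumes P: "closed_ideal X P"
    and nonunits_zd: "carrier (CP X P) - Units (CP X P) \<subseteq> zero_divisors (CP X P)"
    and I: "z_ideal (CP X P) I"
  shows "z0_ideal (CP X P) I"
  unfolding z0_ideal_def
proof (intro conjI ballI subsetI)
  show I_ideal: "ideal I (CP X P)" using I by (simp add: z_ideal_def)
  fix a b assume a: "a \<in> I" and b: "b \<in> Pset (CP X P) a"
  have a_carr: "a \<in> carrier (CP X P)" using ideal.Icarr[OF I_ideal a] .
  have b_carr: "b \<in> carrier (CP X P)" using b by (simp add: Pset_def)
  have "b \<in> Mset (CP X P) a"
    using CP_mem_Mset_if_Zset_subset[OF P a_carr b_carr]
      CP_Zset_subset_if_mem_Pset[OF P nonunits_zd a_carr b_carr b] by blast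
  then show "b \<in> I" using I a by (auto simp: z_ideal_def)
qed

lemma CP_abs_split_annihilated:
  assumes P: "closed_ideal X P" and f: "f \<in> carrier (CP X P)"
    and x: "x \<in> topspace X" "f x = 0" and y: "y \<in> topspace X" "f y \<noteq> 0"
  obtains g h k1 k2 where
    "g \<in> carrier (CP X P)" "h \<in> carrier (CP X P)" "k1 \<in> carrier (CP X P)" "k2 \<in> carrier (CP X P)"
    "\<And>z. g z + h z = \<bar>f z\<bar>" "\<And>z. g z * k1 z = 0" "\<And>z. h z * k2 z = 0"
    "g x = 0" "h x = 0" "k1 x \<noteq> 0" "k2 y \<noteq> 0"
proof -
  define c where "c = \<bar>f y\<bar>"
  have c: "c > 0" using y(2) by (simp add: c_def)
  (* \<phi> s is 0 for |s| \<le> c/3 and |s| for |s| \<ge> c/2 *)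
  define \<phi> where "\<phi> s = max 0 (min \<bar>s\<bar> (3 * \<bar>s\<bar> - c))" for s :: real
  define \<kappa>1 where "\<kappa>1 s = max 0 (c / 3 - \<bar>s\<bar>)" for s :: real
  define \<kappa>2 where "\<kappa>2 s = max 0 (\<bar>s\<bar> - c / 2)" for s :: real
  have cont: "continuous_on UNIV \<phi>" "continuous_on UNIV (\<lambda>s. \<bar>s\<bar> - \<phi> s)"
    "continuous_on UNIV \<kappa>1" "continuous_on UNIV \<kappa>2"
    unfolding \<phi>_def \<kappa>1_def \<kappa>2_def by (intro continuous_intros)+
  have at_0: "\<phi> 0 = 0" "\<kappa>2 0 = 0" using c by (simp_all add: \<phi>_def \<kappa>2_def)
  have \<phi>_\<kappa>1: "\<phi> s * \<kappa>1 s = 0" and \<phi>_\<kappa>2: "(\<bar>s\<bar> - \<phi> s) * \<kappa>2 s = 0" for s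
    unfolding \<phi>_def \<kappa>1_def \<kappa>2_def by (auto simp: max_def min_def)
  define g where "g z = \<phi> (f z)" for z
  define h where "h z = \<bar>f z\<bar> - \<phi> (f z)" for z
  define k1 where "k1 z = (if z \<in> topspace X then \<kappa>1 (f z) else 0)" for z
  define k2 where "k2 z = \<kappa>2 (f z)" for z
  show ?thesis
  proof (rule that[of g h k1 k2])
    show "g \<in> carrier (CP X P)"
      unfolding g_def using CP_compose_closed[OF P f cont(1) at_0(1)] .
    show "h \<in> carrier (CP X P)"
      unfolding h_def using CP_compose_closed[OF P f cont(2)] at_0 by simp
    show "k1 \<in> carrier (CP X P)"
      unfolding k1_def using CP_restrict_compose_closed[OF P f cont(3)] .
    show "k2 \<in> carrier (CP X P)"
      unfolding k2_def using CP_compose_closed[OF P f cont(4) at_0(2)] .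
    show "g z * k1 z = 0" "h z * k2 z = 0" for z
      unfolding g_def h_def k1_def k2_def using \<phi>_\<kappa>1 \<phi>_\<kappa>2 by simp_all
    show "g z + h z = \<bar>f z\<bar>" for z by (simp add: g_def h_def)
    show "g x = 0" "h x = 0" "k1 x \<noteq> 0" "k2 y \<noteq> 0"
      using x y c at_0 by (simp_all add: g_def h_def k1_def k2_def \<kappa>1_def \<kappa>2_def c_def)
  qed
qed

lemma CP_one_notin_add_cgenideal:
  assumes "x \<in> topspace X" "g x = 0" "h x = 0"
  shows "\<one>\<^bsub>CP X P\<^esub> \<notin> PIdl\<^bsub>CP X P\<^esub> g <+>\<^bsub>CP X P\<^esub> PIdl\<^bsub>CP X P\<^esub> h"
proof
  assume "\<one>\<^bsub>CP X P\<^esub> \<in> PIdl\<^bsub>CP X P\<^esub> g <+>\<^bsub>CP X P\<^esub> PIdl\<^bsub>CP X P\<^esub> h"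
  then obtain s r where "\<one>\<^bsub>CP X P\<^esub> = (\<lambda>z. s z * g z + r z * h z)"
    by (auto simp: set_add_def' cgenideal_def)
  from fun_cong[OF this, of x] show False using assms by simp
qed

lemma CP_nonunits_zero_divisors_if_ideal_sums:
  assumes P: "closed_ideal X P"
    and sums: "\<forall>I J. ideal I (CP X P) \<and> I \<subseteq> zero_divisors (CP X P)
              \<and> ideal J (CP X P) \<and> J \<subseteq> zero_divisors (CP X P)
              \<longrightarrow> I <+>\<^bsub>CP X P\<^esub> J = carrier (CP X P) \<or> I <+>\<^bsub>CP X P\<^esub> J \<subseteq> zero_divisors (CP X P)"
  shows "carrier (CP X P) - Units (CP X P) \<subseteq> zero_divisors (CP X P)"
proof
  fix f assume f: "f \<in> carrier (CP X P) - Units (CP X P)"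
  interpret cring "CP X P" by (rule cring_CP[OF P])
  show "f \<in> zero_divisors (CP X P)"
  proof (rule ccontr)
    assume f_nzd: "f \<notin> zero_divisors (CP X P)"
    obtain x where x: "x \<in> topspace X" "f x = 0" using f CP_Units_iff[OF P] by (auto simp: Zset_def)
    have "\<exists>y\<in>topspace X. f y \<noteq> 0"
    proof (rule ccontr)
      assume "\<not> ?thesis"
      then have "f \<otimes>\<^bsub>CP X P\<^esub> \<one>\<^bsub>CP X P\<^esub> = \<zero>\<^bsub>CP X P\<^esub>" by (auto simp: fun_eq_iff)
      moreover have "\<one>\<^bsub>CP X P\<^esub> \<noteq> \<zero>\<^bsub>CP X P\<^esub>" using x(1) by (auto simp: fun_eq_iff)
      ultimately show False using f_nzd f one_closed unfolding zero_divisors_def by blast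
    qed
    then obtain y where y: "y \<in> topspace X" "f y \<noteq> 0" by blast
    obtain g h k1 k2 where carr: "g \<in> carrier (CP X P)" "h \<in> carrier (CP X P)"
        "k1 \<in> carrier (CP X P)" "k2 \<in> carrier (CP X P)"
      and sum: "\<And>z. g z + h z = \<bar>f z\<bar>" and ann: "\<And>z. g z * k1 z = 0" "\<And>z. h z * k2 z = 0"
      and at_x: "g x = 0" "h x = 0" "k1 x \<noteq> 0" and at_y: "k2 y \<noteq> 0"
      using CP_abs_split_annihilated[OF P _ x y] f by blast
    let ?I = "PIdl\<^bsub>CP X P\<^esub> g" and ?J = "PIdl\<^bsub>CP X P\<^esub> h"
    have "?I \<subseteq> zero_divisors (CP X P)"
      using cgenideal_subset_zero_divisors[OF carr(1,3)] ann(1) at_x(3) by (auto simp: fun_eq_iff)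
    moreover have "?J \<subseteq> zero_divisors (CP X P)"
      using cgenideal_subset_zero_divisors[OF carr(2,4)] ann(2) at_y by (auto simp: fun_eq_iff)
    moreover have "\<one>\<^bsub>CP X P\<^esub> \<notin> ?I <+>\<^bsub>CP X P\<^esub> ?J"
      using CP_one_notin_add_cgenideal[of x X g h P] x(1) at_x(1,2) by blast
    ultimately have sum_zd: "?I <+>\<^bsub>CP X P\<^esub> ?J \<subseteq> zero_divisors (CP X P)"
      using sums cgenideal_ideal carr(1,2) one_closed by blast
    have "(\<lambda>z. \<bar>f z\<bar>) = g \<oplus>\<^bsub>CP X P\<^esub> \<one>\<^bsub>CP X P\<^esub> \<otimes>\<^bsub>CP X P\<^esub> h"
      by (simp only: l_one[OF carr(2)]) (simp add: fun_eq_iff sum)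
    also have "\<dots> \<in> ?I <+>\<^bsub>CP X P\<^esub> ?J"
      unfolding mem_add_cgenideal using cgenideal_self[OF carr(1)] by blast
    finally have "(\<lambda>z. \<bar>f z\<bar>) \<in> zero_divisors (CP X P)" using sum_zd by blast
    then have "f \<in> zero_divisors (CP X P)" using f by (auto simp: CP_zero_divisors_iff)
    then show False using f_nzd by blast
  qed
qed

theorem theorem2p15:
  fixes X :: "'a topology" and P :: "'a set set"
  assumes "t1_space X" and "closed_ideal X P"
  shows "(almost_PP X P \<longleftrightarrow> (\<forall>I. z_ideal (CP X P) I \<longrightarrow> z0_ideal (CP X P) I))
       \<and> (almost_PP X P \<longleftrightarrow> (\<forall>M. maximalideal M (CP X P) \<longrightarrow> z0_ideal (CP X P) M))
       \<and> (almost_PP X P \<longleftrightarrow> (\<forall>M. maximalideal M (CP X P) \<longrightarrow> M \<subseteq> zero_divisors (CP X P)))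
       \<and> (almost_PP X P \<longleftrightarrow> (\<forall>I J. ideal I (CP X P) \<and> I \<subseteq> zero_divisors (CP X P)
              \<and> ideal J (CP X P) \<and> J \<subseteq> zero_divisors (CP X P)
              \<longrightarrow> I <+>\<^bsub>CP X P\<^esub> J = carrier (CP X P) \<or> I <+>\<^bsub>CP X P\<^esub> J \<subseteq> zero_divisors (CP X P)))
       \<and> (almost_PP X P \<longleftrightarrow> (\<forall>f \<in> carrier (CP X P). f \<notin> Units (CP X P) \<longrightarrow>
              (\<exists>g \<in> carrier (CP X P). g \<noteq> \<zero>\<^bsub>CP X P\<^esub> \<and> Pset (CP X P) f \<subseteq> Ann (CP X P) g)))"
proof -
  note P = \<open>closed_ideal X P\<close>
  interpret cring "CP X P" by (rule cring_CP[OF P])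
  note almost_iff = almost_PP_iff_nonunits_zero_divisors[OF P]
  have z_z0: "almost_PP X P \<Longrightarrow> z_ideal (CP X P) I \<Longrightarrow> z0_ideal (CP X P) I" for I
    using CP_z_ideal_is_z0_ideal[OF P] almost_iff by blast
  have max_z0: "(\<And>M. maximalideal M (CP X P) \<Longrightarrow> z0_ideal (CP X P) M) \<Longrightarrow> almost_PP X P"
    using nonunits_zero_divisors_if_maximalideals_z0 almost_iff by blast
  have sums: "almost_PP X P \<Longrightarrow> ideal I (CP X P) \<Longrightarrow> ideal J (CP X P) \<Longrightarrow>
      I <+>\<^bsub>CP X P\<^esub> J = carrier (CP X P) \<or> I <+>\<^bsub>CP X P\<^esub> J \<subseteq> zero_divisors (CP X P)" for I J
    using ideal_eq_carrier_or_subset_zero_divisors add_ideals almost_iff by blast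
  have z_iff: "almost_PP X P \<longleftrightarrow> (\<forall>I. z_ideal (CP X P) I \<longrightarrow> z0_ideal (CP X P) I)"
    using z_z0 max_z0 maximalideal_is_z_ideal by blast
  have max_z0_iff: "almost_PP X P \<longleftrightarrow> (\<forall>M. maximalideal M (CP X P) \<longrightarrow> z0_ideal (CP X P) M)"
    using z_z0 max_z0 maximalideal_is_z_ideal by blast
  have sums_iff: "almost_PP X P \<longleftrightarrow> (\<forall>I J. ideal I (CP X P) \<and> I \<subseteq> zero_divisors (CP X P)
              \<and> ideal J (CP X P) \<and> J \<subseteq> zero_divisors (CP X P)
              \<longrightarrow> I <+>\<^bsub>CP X P\<^esub> J = carrier (CP X P) \<or> I <+>\<^bsub>CP X P\<^esub> J \<subseteq> zero_divisors (CP X P))"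
    using sums CP_nonunits_zero_divisors_if_ideal_sums[OF P] almost_iff by blast
  show ?thesis
    using z_iff max_z0_iff sums_iff almost_iff maximalideals_subset_zero_divisors_iff
      nonunits_zero_divisors_iff_Pset_subset_Ann[OF reduced_CP]
    by simp
qed

end
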